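(* Fix a class $c$ and an unlabeled node $v_u$ whose true class is $c$. Suppose $v_u$ has $n\ge0$ unlabeled neighbors and $m\ge0$ labeled neighbors, with $m+n\ge1$, and let $p$ be the probability that an existing linked labeled neighbor is labeled as $c$. Each node $v_j$ carries a score $s_{jc}$ (predicted probability of class $c$ before the final aggregation) whose expectation depends only on its type: $\mu_a=\mathbb{E}(s_{ac})$ for unlabeled nodes, $\mu_b=\mathbb{E}(s_{bc})$ for labeled nodes whose given label is $c$, $\mu_d=\mathbb{E}(s_{dc})$ for labeled nodes whose given label is not $c$, and $\mu_p=\mathbb{E}(s_{pc})$ for nodes $v_p$ provided with a pseudo label. The prediction for $v_u$ is $y_{uc}=\frac{1}{d_u}\sum_{j\in\mathcal{N}(v_u)}s_{jc}$, the average over its $d_u$ neighbors. If $\mu_p>\max\bigl(\mu_a,\;p\mu_b+(1-p)\mu_d\bigr)$, then linking $v_u$ with pseudo-labeled nodes improves its expected predicted probability of class $c$: letting $y^{(k)}_{uc}$ be the prediction after additionally linking $v_u$ with $k$ pseudo-labeled nodes (average over $m+n+k$ neighbors), $\mathbb{E}(y^{(k)}_{uc})>\mathbb{E}(y_{uc})$ for every $k\ge1$, and $\mathbb{E}(y^{(k)}_{uc})$ is strictly increasing in $k$.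
   Context: Setting: semi-supervised node classification with a trained graph convolutional network on a graph with a small set of noisily labeled nodes, extended with a set of unlabeled nodes given pseudo labels. Final predictions are $\mathbf{Y}=\tilde{\mathbf{A}}\mathbf{S}$ with $s_{ic}$ (entries of the last-layer pre-aggregation output $\mathbf{S}$) treated as the predicted probability that $v_i$ belongs to class $c$; the simplified aggregation is the plain average over neighbors. Expectations are over the random label noise and scores; the expected prediction before linking is $\mathbb{E}(y_{uc})=\frac{n\mu_a+pm\mu_b+(1-p)m\mu_d}{m+n}$. *)

theory Defs
  imports Complex_Main
begin

text \<open>By linearity of expectation the expected average of the neighbour scores is the
average of their expected scores: mu_a for unlabeled, p*mu_b + (1-p)*mu_d for labeled,
mu_p for pseudo-labeled neighbours.\<close>

definition exp_pred ::
  "nat \<Rightarrow> nat \<Rightarrow> real \<Rightarrow> real \<Rightarrow> real \<Rightarrow> real \<Rightarrow> real \<Rightarrow> nat \<Rightarrow> real" where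
  "exp_pred n m p mu_a mu_b mu_d mu_p k =
     (real n * mu_a + p * real m * mu_b + (1 - p) * real m * mu_d + real k * mu_p)
       / real (m + n + k)"

end

theory Submission
  imports Defs
begin

text \<open>Linking \<open>k\<close> pseudo-labeled nodes turns the expected prediction into the mean of
  \<open>N = m + n\<close> old neighbours with total expected score \<open>A\<close> and \<open>k\<close> new ones of score
  \<open>\<mu>\<^sub>p\<close>. Both old neighbour types score below \<open>\<mu>\<^sub>p\<close> in expectation, so \<open>A < N \<mu>\<^sub>p\<close>,
  and adding copies of a value above the current mean strictly raises the mean.\<close>

lemma mean_add_copies_less:
  fixes A N \<mu> k l :: real
  assumes "N > 0" and "A < N * \<mu>" and "0 \<le> k" and "k < l"
  shows "(A + k * \<mu>) / (N + k) < (A + l * \<mu>) / (N + l)"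
proof -
  have "(A + k * \<mu>) * (N + l) < (A + l * \<mu>) * (N + k)"
  proof -
    have "(A + l * \<mu>) * (N + k) - (A + k * \<mu>) * (N + l) = (l - k) * (N * \<mu> - A)"
      by (simp add: algebra_simps)
    also have "\<dots> > 0"
      using assms by simp
    finally show ?thesis
      by simp
  qed
  then show ?thesis
    using assms by (simp add: divide_simps)
qed

lemma strict_mono_mean_add_copies:
  fixes A N \<mu> :: real
  assumes "N > 0" and "A < N * \<mu>"
  shows "strict_mono (\<lambda>k::nat. (A + real k * \<mu>) / (N + real k))"
  by (rule strict_monoI) (use assms mean_add_copies_less in simp)

lemma weighted_sum_less:
  fixes a b \<mu> :: real and n m :: nat
  assumes "m + n \<ge> 1" and "a < \<mu>" and "b < \<mu>"
  shows "real n * a + real m * b < (real m + real n) * \<mu>"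
proof -
  have "real n * a \<le> real n * \<mu>" and "real m * b \<le> real m * \<mu>"
    using assms by (simp_all add: mult_left_mono)
  moreover have "real n * a < real n * \<mu> \<or> real m * b < real m * \<mu>"
    using assms by (cases "n = 0") auto
  ultimately show ?thesis
    by (auto simp: algebra_simps)
qed

lemma exp_pred_eq_mean_add_copies:
  "exp_pred n m p mu_a mu_b mu_d mu_p k =
     (real n * mu_a + real m * (p * mu_b + (1 - p) * mu_d) + real k * mu_p)
       / (real m + real n + real k)"
  unfolding exp_pred_def by (simp add: algebra_simps)

theorem theorem2:
  fixes n m :: nat and p mu_a mu_b mu_d mu_p :: real
  assumes "m + n \<ge> 1"
    and "0 \<le> p" and "p \<le> 1"
    and "mu_p > max mu_a (p * mu_b + (1 - p) * mu_d)"
  shows "(\<forall>k::nat. k \<ge> 1 \<longrightarrow>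
            exp_pred n m p mu_a mu_b mu_d mu_p k > exp_pred n m p mu_a mu_b mu_d mu_p 0)
         \<and> strict_mono (exp_pred n m p mu_a mu_b mu_d mu_p)"
proof -
  have "real n * mu_a + real m * (p * mu_b + (1 - p) * mu_d) < (real m + real n) * mu_p"
    using assms(1,4) by (intro weighted_sum_less) auto
  moreover have "real m + real n > 0"
    using assms(1) by linarith
  ultimately have mono: "strict_mono (exp_pred n m p mu_a mu_b mu_d mu_p)"
    unfolding exp_pred_eq_mean_add_copies add.assoc[symmetric]
    by (intro strict_mono_mean_add_copies)
  then show ?thesis
    by (auto simp: strict_mono_def)
qed

end
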